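(* For every base $\mathcal{B}$, atomic multisets $L,K$ and ILL formulae $\varphi,\psi,\chi$: if $\Vdash^L_{\mathcal{B}}\varphi\otimes\psi$ and $\varphi,\psi\Vdash^K_{\mathcal{B}}\chi$, then $\Vdash^{L,K}_{\mathcal{B}}\chi$.
   Context: Fix a set $\mathbb{A}$ of propositional atoms. ILL formulae: $\phi ::= p\in\mathbb{A} \mid \top \mid 0 \mid 1 \mid \phi\multimap\phi \mid \phi\otimes\phi \mid \phi\,\&\,\phi \mid \phi\oplus\phi \mid\ !\phi$. All multisets are finite; "$\Gamma,\Delta$" denotes multiset union. Atomic rules and bases: an atomic sequent is $P\Rightarrow p$ with $P$ a multiset of atoms, $p$ an atom. An atomic box is a multiset of atomic sequents. An atomic rule is a triple $\langle\mathbf{A},\mathbf{S},p\rangle$ with $\mathbf{A}$ a multiset of atomic boxes, $\mathbf{S}$ an atomic box, $p$ an atom. A base is a set of atomic rules. An atom $p$ is persistent in $\mathcal{B}$ if some $\langle\varnothing,\mathbf{S},p\rangle\in\mathcal{B}$ has $\mathbf{S}\neq\varnothing$. Derivability $\vdash_{\mathcal{B}}$: (Ref) $p\vdash_{\mathcal{B}}p$; (App) if $\langle\mathbf{A},\mathbf{S},p\rangle\in\mathcal{B}$ with $\mathbf{A}=\{\mathbf{T}_1,\dots,\mathbf{T}_m\}$, and there are atomic multisets $C_1,\dots,C_n$ ($n\ge m$) and a multiset $D=\{d_{m+1},\dots,d_n\}$ of atoms persistent in $\mathcal{B}$ such that $C_i,Q\vdash_{\mathcal{B}}q$ for every $i\le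 m$ and every $Q\Rightarrow q\in\mathbf{T}_i$, $C_j\vdash_{\mathcal{B}}d_j$ for every $m<j\le n$, and $D,U\vdash_{\mathcal{B}}v$ for every $U\Rightarrow v\in\mathbf{S}$, then $C_1,\dots,C_n\vdash_{\mathcal{B}}p$. Support $\Vdash^L_{\mathcal{B}}$ (base $\mathcal{B}$, atomic multiset $L$), by induction on formulae: $\Vdash^L_{\mathcal{B}}p$ iff $L\vdash_{\mathcal{B}}p$; $\Vdash^L_{\mathcal{B}}\varphi\multimap\psi$ iff $\varphi\Vdash^L_{\mathcal{B}}\psi$; $\Vdash^L_{\mathcal{B}}\varphi\otimes\psi$ iff for all $\mathcal{C}\supseteq\mathcal{B}$, atomic $K$, atoms $p$: if $\varphi,\psi\Vdash^K_{\mathcal{C}}p$ then $\Vdash^{L,K}_{\mathcal{C}}p$; $\Vdash^L_{\mathcal{B}}1$ iff for all $\mathcal{C}\supseteq\mathcal{B}$, $K$, $p$: if $\Vdash^K_{\mathcal{C}}p$ then $\Vdash^{L,K}_{\mathcal{C}}p$; $\Vdash^L_{\mathcal{B}}\varphi\&\psi$ iff $\Vdash^L_{\mathcal{B}}\varphi$ and $\Vdash^L_{\mathcal{B}}\psi$; $\Vdash^L_{\mathcal{B}}\varphi\oplus\psi$ iff for all $\mathcal{C}\supseteq\mathcal{B}$, $K$, $p$: if $\varphi\Vdash^K_{\mathcal{C}}p$ and $\psi\Vdash^K_{\mathcal{C}}p$ then $\Vdash^{L,K}_{\mathcal{C}}p$; $\Vdash^L_{\mathcal{B}}0$ iff $\Vdash^{L,K}_{\mathcal{B}}p$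 for all atoms $p$ and atomic $K$; $\Vdash^L_{\mathcal{B}}\top$ always; $\Vdash^L_{\mathcal{B}}!\varphi$ iff for all $\mathcal{C}\supseteq\mathcal{B}$, $K$, $p$: if (for all $\mathcal{D}\supseteq\mathcal{C}$, $\Vdash^{\varnothing}_{\mathcal{D}}\varphi$ implies $\Vdash^K_{\mathcal{D}}p$) then $\Vdash^{L,K}_{\mathcal{C}}p$. For nonempty multisets: $\Vdash^L_{\mathcal{B}}\Gamma,\Delta$ iff $L=K,M$ with $\Vdash^K_{\mathcal{B}}\Gamma$ and $\Vdash^M_{\mathcal{B}}\Delta$. For a nonempty antecedent written $!\Delta,\Theta$, where $!\Delta$ collects the formulae with top-level connective $!$ (with $\Delta$ the formulae under those $!$) and $\Theta$ contains none: $!\Delta,\Theta\Vdash^L_{\mathcal{B}}\varphi$ iff for all $\mathcal{C}\supseteq\mathcal{B}$ and atomic $K$, if $\Vdash^{\varnothing}_{\mathcal{C}}\delta$ for every $\delta\in\Delta$ and $\Vdash^K_{\mathcal{C}}\Theta$ then $\Vdash^{L,K}_{\mathcal{C}}\varphi$ (when $\Theta$ is empty, $K$ is empty). An empty antecedent: $\varnothing\Vdash^L_{\mathcal{B}}\varphi$ means $\Vdash^L_{\mathcal{B}}\varphi$. *)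

theory Defs
  imports Main "HOL-Library.Multiset"
begin

datatype 'a form =
    Atom 'a | Top | Zero | One
  | Lolli "'a form" "'a form"
  | Tensor "'a form" "'a form"
  | With "'a form" "'a form"
  | Plus "'a form" "'a form"
  | Bang "'a form"

type_synonym 'a aseq = "'a multiset \<times> 'a"
type_synonym 'a abox = "'a aseq multiset"
type_synonym 'a arule = "'a abox multiset \<times> 'a abox \<times> 'a"
type_synonym 'a base = "'a arule set"

definition persistent :: "'a base \<Rightarrow> 'a \<Rightarrow> bool" where
  "persistent B p \<longleftrightarrow> (\<exists>S. ({#}, S, p) \<in> B \<and> S \<noteq> {#})"

text \<open>Derivability. In (App) the boxes T_1..T_m are the list Ts (with mset Ts = A),
  the multisets C_1..C_n are the list Cs, and d_{m+1}..d_n are the list ds.\<close>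

inductive derives :: "'a base \<Rightarrow> 'a multiset \<Rightarrow> 'a \<Rightarrow> bool" for B :: "'a base" where
  Ref: "derives B {#p#} p"
| App: "\<lbrakk> (A, S, p) \<in> B; mset Ts = A; length Cs = length Ts + length ds;
          \<forall>i<length Ts. \<forall>Q q. (Q, q) \<in># Ts ! i \<longrightarrow> derives B (Cs ! i + Q) q;
          \<forall>j<length ds. persistent B (ds ! j) \<and> derives B (Cs ! (length Ts + j)) (ds ! j);
          \<forall>U v. (U, v) \<in># S \<longrightarrow> derives B (mset ds + U) v \<rbrakk>
        \<Longrightarrow> derives B (sum_list Cs) p"

fun unbang :: "'a form \<Rightarrow> 'a form list" where
  "unbang (Bang d) = [d]"
| "unbang _ = []"

fun isbang :: "'a form \<Rightarrow> bool" where
  "isbang (Bang d) = True"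
| "isbang _ = False"

fun msupL :: "('a form \<Rightarrow> 'a base \<Rightarrow> 'a multiset \<Rightarrow> bool) \<Rightarrow> 'a base \<Rightarrow> 'a multiset
               \<Rightarrow> 'a form list \<Rightarrow> bool" where
  "msupL S C K [] \<longleftrightarrow> K = {#}"
| "msupL S C K (x # xs) \<longleftrightarrow> (\<exists>K1 K2. K = K1 + K2 \<and> S x C K1 \<and> msupL S C K2 xs)"

text \<open>Support of a sequent with nonempty antecedent !\<Delta>,\<Theta>, parametric in the support
  function S and in the (support of the) conclusion c.\<close>

definition ante :: "('a form \<Rightarrow> 'a base \<Rightarrow> 'a multiset \<Rightarrow> bool) \<Rightarrow> 'a form list \<Rightarrow> 'a base
                    \<Rightarrow> 'a multiset \<Rightarrow> ('a base \<Rightarrow> 'a multiset \<Rightarrow> bool) \<Rightarrow> bool" where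
  "ante S \<Gamma> B L c \<longleftrightarrow>
     (\<forall>C K. B \<subseteq> C \<longrightarrow> (\<forall>d \<in> set (concat (map unbang \<Gamma>)). S d C {#})
            \<longrightarrow> msupL S C K (filter (\<lambda>x. \<not> isbang x) \<Gamma>) \<longrightarrow> c C (L + K))"

lemma ante_cong [fundef_cong]:
  assumes "\<Gamma> = \<Gamma>'" "B = B'" "L = L'"
    and "\<And>x C K. x \<in> set \<Gamma>' \<or> Bang x \<in> set \<Gamma>' \<Longrightarrow> S x C K = S' x C K"
    and "\<And>C M. c C M = c' C M"
  shows "ante S \<Gamma> B L c = ante S' \<Gamma>' B' L' c'"
proof -
  have u: "\<And>d. d \<in> set (concat (map unbang \<Gamma>')) \<Longrightarrow> Bang d \<in> set \<Gamma>'"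
  proof -
    fix d assume "d \<in> set (concat (map unbang \<Gamma>'))"
    then obtain x where "x \<in> set \<Gamma>'" "d \<in> set (unbang x)" by auto
    moreover from \<open>d \<in> set (unbang x)\<close> have "x = Bang d" by (cases x) auto
    ultimately show "Bang d \<in> set \<Gamma>'" by simp
  qed
  have m: "\<And>K C xs. set xs \<subseteq> set \<Gamma>' \<Longrightarrow> msupL S C K xs = msupL S' C K xs"
  proof -
    fix K C xs show "set xs \<subseteq> set \<Gamma>' \<Longrightarrow> msupL S C K xs = msupL S' C K xs"
      by (induction xs arbitrary: K) (auto simp: assms(4))
  qed
  show ?thesis unfolding ante_def using assms u m[of "filter _ \<Gamma>'"]
    by (auto simp: assms(4))
qed

function sup :: "'a form \<Rightarrow> 'a base \<Rightarrow> 'a multiset \<Rightarrow> bool" where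
  "sup (Atom p) B L \<longleftrightarrow> derives B L p"
| "sup (Lolli \<phi> \<psi>) B L \<longleftrightarrow> ante (\<lambda>x C K. sup x C K) [\<phi>] B L (\<lambda>C M. sup \<psi> C M)"
| "sup (Tensor \<phi> \<psi>) B L \<longleftrightarrow>
     (\<forall>C K p. B \<subseteq> C \<longrightarrow> ante (\<lambda>x C K. sup x C K) [\<phi>, \<psi>] C K (\<lambda>C' M. derives C' M p)
        \<longrightarrow> derives C (L + K) p)"
| "sup One B L \<longleftrightarrow> (\<forall>C K p. B \<subseteq> C \<longrightarrow> derives C K p \<longrightarrow> derives C (L + K) p)"
| "sup (With \<phi> \<psi>) B L \<longleftrightarrow> sup \<phi> B L \<and> sup \<psi> B L"
| "sup (Plus \<phi> \<psi>) B L \<longleftrightarrow>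
     (\<forall>C K p. B \<subseteq> C \<longrightarrow> ante (\<lambda>x C K. sup x C K) [\<phi>] C K (\<lambda>C' M. derives C' M p)
        \<longrightarrow> ante (\<lambda>x C K. sup x C K) [\<psi>] C K (\<lambda>C' M. derives C' M p)
        \<longrightarrow> derives C (L + K) p)"
| "sup Zero B L \<longleftrightarrow> (\<forall>p K. derives B (L + K) p)"
| "sup Top B L \<longleftrightarrow> True"
| "sup (Bang \<phi>) B L \<longleftrightarrow>
     (\<forall>C K p. B \<subseteq> C \<longrightarrow> (\<forall>D. C \<subseteq> D \<longrightarrow> sup \<phi> D {#} \<longrightarrow> derives D K p)
        \<longrightarrow> derives C (L + K) p)"
  by pat_completeness auto
termination
  by (relation "measure (\<lambda>(x, B, L). size x)") auto

text \<open>Support of a sequent \<Gamma> \<Vdash>^L_B \<phi> (antecedent multiset represented by a list).\<close>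

definition supports :: "'a form list \<Rightarrow> 'a base \<Rightarrow> 'a multiset \<Rightarrow> 'a form \<Rightarrow> bool" where
  "supports \<Gamma> B L \<phi> \<longleftrightarrow>
     (if \<Gamma> = [] then sup \<phi> B L else ante (\<lambda>x C K. sup x C K) \<Gamma> B L (\<lambda>C M. sup \<phi> C M))"

end

theory Submission
  imports Defs
begin

text \<open>For an atom the claim is the clause defining support of
  \<open>\<phi> \<otimes> \<psi>\<close>. The connectives \<open>0\<close>, \<open>1\<close>, \<open>\<otimes>\<close>, \<open>\<oplus>\<close> and \<open>!\<close> are themselves defined by
  elimination into atoms: given an elimination premise for \<open>\<chi>\<close> with context \<open>K'\<close> over an
  extension \<open>C\<close> of \<open>B\<close>, monotonicity of support under base extension turns
  \<open>\<phi>, \<psi> \<Vdash>\<^sup>K \<chi>\<close> into support of the atom \<open>p\<close> from \<open>\<phi>, \<psi>\<close> in context \<open>K + K'\<close>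
  over \<open>C\<close>, and the atomic case applies.\<close>

lemma persistent_mono: "persistent B d \<Longrightarrow> B \<subseteq> C \<Longrightarrow> persistent C d"
  unfolding persistent_def by blast

lemma derives_mono: "derives B L p \<Longrightarrow> B \<subseteq> C \<Longrightarrow> derives C L p"
proof (induction rule: derives.induct)
  case (Ref p)
  show ?case by (rule derives.Ref)
next
  case (App A S p Ts Cs ds)
  then show ?case by (intro derives.App[of A S p C Ts Cs ds]) (auto intro: persistent_mono)
qed

lemma sup_base_mono: "sup \<chi> B L \<Longrightarrow> B \<subseteq> C \<Longrightarrow> sup \<chi> C L"
proof (induction \<chi> arbitrary: B L C)
  case (Atom p)
  then show ?case using derives_mono by simp
next
  case Zero
  then show ?case by simp (meson derives_mono)
next
  case (Lolli \<phi> \<psi>)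
  then show ?case unfolding sup.simps ante_def by (meson order_trans)
next
  case (Tensor \<phi> \<psi>)
  then show ?case unfolding sup.simps by (meson order_trans)
next
  case (Plus \<phi> \<psi>)
  then show ?case unfolding sup.simps by (meson order_trans)
next
  case (Bang \<phi>)
  then show ?case unfolding sup.simps by (meson order_trans)
qed auto

lemma msupL_sup_mono: "msupL sup B K xs \<Longrightarrow> B \<subseteq> C \<Longrightarrow> msupL sup C K xs"
  by (induction xs arbitrary: K) (auto intro: sup_base_mono)

lemma ante_mono: "ante S \<Gamma> B L c \<Longrightarrow> B \<subseteq> C \<Longrightarrow> ante S \<Gamma> C L c"
  unfolding ante_def by auto

lemma ante_extend_conclusion:
  assumes "ante S \<Gamma> B K c"
    and "\<And>C M. B \<subseteq> C \<Longrightarrow> c C M \<Longrightarrow> c' C (M + K')"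
  shows "ante S \<Gamma> B (K + K') c'"
  unfolding ante_def
proof (intro allI impI)
  fix C K0
  assume "B \<subseteq> C" "\<forall>d\<in>set (concat (map unbang \<Gamma>)). S d C {#}"
    "msupL S C K0 (filter (\<lambda>x. \<not> isbang x) \<Gamma>)"
  then have "c' C (K + K0 + K')" using assms unfolding ante_def by blast
  then show "c' C (K + K' + K0)" by (simp add: ac_simps)
qed

lemma tensor_elim_atom:
  assumes "sup (Tensor \<phi> \<psi>) B L" and "ante sup [\<phi>, \<psi>] B K (\<lambda>C M. derives C M p)"
  shows "derives B (L + K) p"
  using assms by auto

lemma tensor_elim_into_elimination_form:
  assumes sup_\<chi>: "\<And>B L. sup \<chi> B L \<longleftrightarrow> (\<forall>C K p. B \<subseteq> C \<longrightarrow> E C K p \<longrightarrow> derives C (L + K) p)"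
    and E_mono: "\<And>C D K p. E C K p \<Longrightarrow> C \<subseteq> D \<Longrightarrow> E D K p"
    and tensor: "sup (Tensor \<phi> \<psi>) B L"
    and ante_\<chi>: "ante sup [\<phi>, \<psi>] B K (sup \<chi>)"
  shows "sup \<chi> B (L + K)"
  unfolding sup_\<chi>
proof (intro allI impI)
  fix C K' p
  assume "B \<subseteq> C" and E: "E C K' p"
  have "ante sup [\<phi>, \<psi>] C (K + K') (\<lambda>D M. derives D M p)"
  proof (rule ante_extend_conclusion[OF ante_mono[OF ante_\<chi> \<open>B \<subseteq> C\<close>]])
    fix D M
    assume "C \<subseteq> D" and "sup \<chi> D M"
    with E_mono[OF E \<open>C \<subseteq> D\<close>] show "derives D (M + K') p"
      unfolding sup_\<chi> by blast
  qed
  then have "derives C (L + (K + K')) p"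
    by (rule tensor_elim_atom[OF sup_base_mono[OF tensor \<open>B \<subseteq> C\<close>]])
  then show "derives C (L + K + K') p" by (simp add: ac_simps)
qed

lemma tensor_elim_lolli:
  assumes IH: "\<And>B L K. sup (Tensor \<phi> \<psi>) B L \<Longrightarrow> ante sup [\<phi>, \<psi>] B K (sup b)
                \<Longrightarrow> sup b B (L + K)"
    and tensor: "sup (Tensor \<phi> \<psi>) B L"
    and ante_lolli: "ante sup [\<phi>, \<psi>] B K (sup (Lolli a b))"
  shows "sup (Lolli a b) B (L + K)"
  unfolding sup.simps ante_def
proof (intro allI impI)
  fix C K'
  assume "B \<subseteq> C"
    and bangs: "\<forall>d\<in>set (concat (map unbang [a])). sup d C {#}"
    and rest: "msupL sup C K' (filter (\<lambda>x. \<not> isbang x) [a])"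
  have "ante sup [\<phi>, \<psi>] C (K + K') (sup b)"
  proof (rule ante_extend_conclusion[OF ante_mono[OF ante_lolli \<open>B \<subseteq> C\<close>]])
    fix D M
    assume "C \<subseteq> D" and "sup (Lolli a b) D M"
    moreover have "\<forall>d\<in>set (concat (map unbang [a])). sup d D {#}"
      using bangs sup_base_mono \<open>C \<subseteq> D\<close> by blast
    moreover have "msupL sup D K' (filter (\<lambda>x. \<not> isbang x) [a])"
      using msupL_sup_mono[OF rest \<open>C \<subseteq> D\<close>] .
    ultimately show "sup b D (M + K')" unfolding sup.simps ante_def by blast
  qed
  then have "sup b C (L + (K + K'))"
    by (rule IH[OF sup_base_mono[OF tensor \<open>B \<subseteq> C\<close>]])
  then show "sup b C (L + K + K')" by (simp add: ac_simps)
qed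

lemma tensor_elim:
  "sup (Tensor \<phi> \<psi>) B L \<Longrightarrow> ante sup [\<phi>, \<psi>] B K (sup \<chi>) \<Longrightarrow> sup \<chi> B (L + K)"
proof (induction \<chi> arbitrary: B L K)
  case (Atom p)
  have "sup (Atom p) = (\<lambda>C M. derives C M p)"
    by (simp add: fun_eq_iff)
  with tensor_elim_atom[OF Atom(1)] Atom(2) show ?case by simp
next
  case Top
  then show ?case by simp
next
  case Zero
  have "derives B (L + K + K') p" for p K'
  proof -
    have "ante sup [\<phi>, \<psi>] B (K + K') (\<lambda>C M. derives C M p)"
      using ante_extend_conclusion[OF Zero(2)] by simp
    then have "derives B (L + (K + K')) p"
      by (rule tensor_elim_atom[OF Zero(1)])
    then show ?thesis by (simp add: ac_simps)
  qed
  then show ?case by simp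
next
  case One
  from sup.simps(4) derives_mono One show ?case
    by (rule tensor_elim_into_elimination_form)
next
  case (Tensor a b)
  from sup.simps(3) ante_mono Tensor(3,4) show ?case
    by (rule tensor_elim_into_elimination_form)
next
  case (Plus a b)
  show ?case
  proof (rule tensor_elim_into_elimination_form
      [where E = "\<lambda>C K p. ante sup [a] C K (\<lambda>C' M. derives C' M p)
                        \<and> ante sup [b] C K (\<lambda>C' M. derives C' M p)"])
    show "sup (Plus a b) B' L' \<longleftrightarrow>
      (\<forall>C K p. B' \<subseteq> C \<longrightarrow> ante sup [a] C K (\<lambda>C' M. derives C' M p)
                      \<and> ante sup [b] C K (\<lambda>C' M. derives C' M p) \<longrightarrow> derives C (L' + K) p)"
      for B' L' by auto
  qed (use Plus(3,4) ante_mono in blast)+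
next
  case (Bang a)
  have premise_mono: "\<forall>E. D \<subseteq> E \<longrightarrow> sup a E {#} \<longrightarrow> derives E K p"
    if "\<forall>E. C \<subseteq> E \<longrightarrow> sup a E {#} \<longrightarrow> derives E K p" and "C \<subseteq> D" for C D K p
    using that by blast
  from sup.simps(9) premise_mono Bang(2,3) show ?case
    by (rule tensor_elim_into_elimination_form)
next
  case (With a b)
  have "ante sup [\<phi>, \<psi>] B (K + {#}) (sup a)" "ante sup [\<phi>, \<psi>] B (K + {#}) (sup b)"
    by (rule ante_extend_conclusion[OF With(4)], simp)+
  with With show ?case by simp
next
  case (Lolli a b)
  from Lolli(2-4) show ?case by (rule tensor_elim_lolli)
qed

theorem lemma5:
  fixes B :: "'a base" and L K :: "'a multiset" and \<phi> \<psi> \<chi> :: "'a form"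
  assumes "sup (Tensor \<phi> \<psi>) B L"
    and "supports [\<phi>, \<psi>] B K \<chi>"
  shows "sup \<chi> B (L + K)"
  using tensor_elim[OF assms(1)] assms(2) unfolding supports_def by simp

end
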